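(* Let $a=(w_1,\dots,w_n)$ be a weak CLT sentence in which every $w_i$ is a closed word with first letter $1$. Then $\mathrm{wt}(a)\le 1+\sum_{i=1}^n\frac{\ell(w_i)-2}{2}$.
   Context: A word is a finite sequence $w=(s_1,\dots,s_m)$ of positive integers; $\ell(w)=m$; closed means $s_1=s_m$. Its edges are $E_w=\{\{s_i,s_{i+1}\}:1\le i\le m-1\}$ (undirected, self edges allowed), and $N_e^w=\#\{i\le m-1:\{s_i,s_{i+1}\}=e\}$. A sentence is a finite sequence $a=(w_1,\dots,w_n)$ of words; $\mathrm{wt}(a)$ is the number of distinct letters appearing in $a$, $E_a=\bigcup_i E_{w_i}$, $N_e^a=\sum_iN_e^{w_i}$. $a$ is a weak CLT sentence if (S1) $N_e^a\ge2$ for all $e\in E_a$ and (S2) for every $i$ there is $j\ne i$ with $E_{w_i}\cap E_{w_j}\ne\emptyset$. *)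

theory Defs
  imports Main "HOL.Real"
begin

type_synonym word = "nat list"
type_synonym sentence = "word list"

definition is_word :: "word \<Rightarrow> bool" where
  "is_word w \<longleftrightarrow> (\<forall>s\<in>set w. 0 < s)"

definition closed_word :: "word \<Rightarrow> bool" where
  "closed_word w \<longleftrightarrow> w \<noteq> [] \<and> hd w = last w"

text \<open>Edges of a word: undirected, self edges allowed (as singleton sets).\<close>
definition word_edges :: "word \<Rightarrow> nat set set" where
  "word_edges w = {{w ! i, w ! (Suc i)} | i. Suc i < length w}"

definition word_edge_count :: "word \<Rightarrow> nat set \<Rightarrow> nat" where
  "word_edge_count w e = card {i. Suc i < length w \<and> {w ! i, w ! (Suc i)} = e}"

definition sentence_letters :: "sentence \<Rightarrow> nat set" where
  "sentence_letters a = (\<Union>w\<in>set a. set w)"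

definition wt :: "sentence \<Rightarrow> nat" where
  "wt a = card (sentence_letters a)"

definition sentence_edges :: "sentence \<Rightarrow> nat set set" where
  "sentence_edges a = (\<Union>w\<in>set a. word_edges w)"

definition sentence_edge_count :: "sentence \<Rightarrow> nat set \<Rightarrow> nat" where
  "sentence_edge_count a e = (\<Sum>i<length a. word_edge_count (a ! i) e)"

definition weak_CLT_sentence :: "sentence \<Rightarrow> bool" where
  "weak_CLT_sentence a \<longleftrightarrow>
     (\<forall>e\<in>sentence_edges a. sentence_edge_count a e \<ge> 2) \<and>
     (\<forall>i<length a. \<exists>j<length a. j \<noteq> i \<and> word_edges (a ! i) \<inter> word_edges (a ! j) \<noteq> {})"

end

theory Submission
  imports Defs
begin

(* Let C be the cyclic content of the sentence: the concatenation of all words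
   with their last letter dropped, so length C = sum (l(w_i) - 1).  We show
     2 * wt(a) + n <= 2 + length C,
   which is the claim after dividing by 2.  The proof is by induction on length C.
   A "spike" is a letter v occurring exactly once in the whole sentence, in the pattern
   u v u.  Cutting it out (u v u becomes u) keeps the sentence a weak CLT sentence of
   closed words, lowers wt by one and length C by two, so the bound is inherited.
   Without spikes, every letter v other than the common first letter r occurs at least
   twice in C: a single interior occurrence u v u' with u <> u' would make the edge
   {u,v} appear only once, contradicting (S1).  The letter r occurs at least once in
   every word of C, and counting letters of C gives length C >= n + 2 (wt(a) - 1). *)

lemma set_eq_nth_image: "set xs = (!) xs ` {..<length xs}"
  using nth_image[of "length xs" xs] by (simp add: atLeast0LessThan)

fun steps :: "'a list \<Rightarrow> ('a \<times> 'a) list" where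
  "steps (x # y # zs) = (x, y) # steps (y # zs)"
| "steps _ = []"

lemma length_steps: "length (steps w) = length w - 1"
  by (induction w rule: steps.induct) auto

lemma nth_steps: "i < length w - 1 \<Longrightarrow> steps w ! i = (w ! i, w ! Suc i)"
proof (induction w arbitrary: i rule: steps.induct)
  case (1 x y zs)
  then show ?case by (cases i) auto
qed auto

lemma steps_append: "steps (xs @ y # ys) = steps (xs @ [y]) @ steps (y # ys)"
  by (induction xs rule: steps.induct) auto

lemma set_steps: "(x, y) \<in> set (steps w) \<Longrightarrow> x \<in> set w \<and> y \<in> set w"
  by (induction w rule: steps.induct) auto

lemma word_edge_count_steps:
  "word_edge_count w e = length (filter (\<lambda>(x, y). {x, y} = e) (steps w))"
proof -
  have "{i. i < length (steps w) \<and> (\<lambda>(x, y). {x, y} = e) (steps w ! i)}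
      = {i. Suc i < length w \<and> {w ! i, w ! Suc i} = e}"
    by (auto simp: length_steps nth_steps)
  then show ?thesis
    unfolding word_edge_count_def length_filter_conv_card by simp
qed

lemma word_edges_steps: "word_edges w = (\<lambda>(x, y). {x, y}) ` set (steps w)"
proof -
  have "word_edges w = (\<lambda>i. (\<lambda>(x, y). {x, y}) (steps w ! i)) ` {..<length (steps w)}"
    unfolding word_edges_def by (auto simp: length_steps nth_steps)
  then show ?thesis
    by (simp add: set_eq_nth_image[of "steps w"] image_image)
qed

lemma word_edge_subset: "e \<in> word_edges w \<Longrightarrow> e \<subseteq> set w"
  by (auto simp: word_edges_steps dest: set_steps)

lemma length_ge_2_if_edge: "word_edges w \<noteq> {} \<Longrightarrow> 2 \<le> length w"
  unfolding word_edges_def by auto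

lemma edge_if_count_pos: "0 < word_edge_count w e \<Longrightarrow> e \<in> word_edges w"
  unfolding word_edge_count_def word_edges_def by (auto simp: card_gt_0_iff)

lemma word_edge_count_absent: "v \<notin> set w \<Longrightarrow> v \<in> e \<Longrightarrow> word_edge_count w e = 0"
  unfolding word_edge_count_steps by (auto simp: filter_empty_conv dest: set_steps)

lemma word_edge_count_passage:
  assumes "v \<notin> set p" "v \<notin> set q" "v \<noteq> u" "v \<noteq> u'" "u \<noteq> u'"
  shows "word_edge_count (p @ [u, v, u'] @ q) {u, v} = 1"
proof -
  have "steps (p @ [u, v, u'] @ q) = steps (p @ [u]) @ (u, v) # (v, u') # steps (u' # q)"
    using steps_append[of p u "v # u' # q"] by simp
  moreover have "filter (\<lambda>(x, y). {x, y} = {u, v}) (steps (p @ [u])) = []"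
    using assms by (force simp: filter_empty_conv dest: set_steps)
  moreover have "filter (\<lambda>(x, y). {x, y} = {u, v}) (steps (u' # q)) = []"
    using assms by (force simp: filter_empty_conv dest: set_steps)
  moreover have "{v, u'} \<noteq> {u, v}"
    using assms by (auto simp: doubleton_eq_iff)
  ultimately show ?thesis
    unfolding word_edge_count_steps by simp
qed

lemma steps_cut_excursion:
  "steps (p @ [u, v, u] @ q) = steps (p @ [u]) @ (u, v) # (v, u) # steps (u # q)"
  "steps (p @ u # q) = steps (p @ [u]) @ steps (u # q)"
  using steps_append[of p u "v # u # q"] steps_append[of p u q] by simp_all

lemma word_edge_count_cut:
  "word_edge_count (p @ [u, v, u] @ q) e = word_edge_count (p @ u # q) e + (if e = {u, v} then 2 else 0)"
  unfolding word_edge_count_steps steps_cut_excursion(1)[of p u v q] steps_cut_excursion(2)[of p u q]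
  by (simp add: insert_commute[of v u])

lemma word_edges_cut: "word_edges (p @ [u, v, u] @ q) = insert {u, v} (word_edges (p @ u # q))"
  unfolding word_edges_steps steps_cut_excursion(1)[of p u v q] steps_cut_excursion(2)[of p u q]
  by (simp add: insert_commute[of v u])

lemma sentence_letters_nth: "sentence_letters a = (\<Union>j<length a. set (a ! j))"
  unfolding sentence_letters_def by (subst set_eq_nth_image) simp

lemma sentence_edges_nth: "sentence_edges a = (\<Union>j<length a. word_edges (a ! j))"
  unfolding sentence_edges_def by (subst set_eq_nth_image) simp

lemma sum_nth_list_update:
  fixes f :: "'a \<Rightarrow> 'b::comm_monoid_add"
  assumes "i < length xs"
  shows "(\<Sum>j<length xs. f (xs[i := x] ! j)) + f (xs ! i) = (\<Sum>j<length xs. f (xs ! j)) + f x"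
proof -
  have "(\<Sum>j<length xs. g j) = g i + (\<Sum>j\<in>{..<length xs} - {i}. g j)" for g :: "nat \<Rightarrow> 'b"
    using assms by (simp add: sum.remove)
  moreover have "(\<Sum>j\<in>{..<length xs} - {i}. f (xs[i := x] ! j)) = (\<Sum>j\<in>{..<length xs} - {i}. f (xs ! j))"
    by (intro sum.cong) auto
  ultimately show ?thesis
    using assms by (simp add: ac_simps)
qed

lemma UN_nth_list_update:
  assumes "i < length xs"
  shows "(\<Union>j<length xs. F (xs ! j)) = F (xs ! i) \<union> (\<Union>j\<in>{..<length xs} - {i}. F (xs ! j))"
    and "(\<Union>j<length xs. F (xs[i := x] ! j)) = F x \<union> (\<Union>j\<in>{..<length xs} - {i}. F (xs ! j))"
  using assms by (auto simp: nth_list_update split: if_splits)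

text \<open>The cyclic content of a sentence: every word with its (repeated) last letter dropped.
  Its length is the total number of steps, which drives the induction.\<close>
definition cyclic_content :: "sentence \<Rightarrow> nat list" where
  "cyclic_content a = concat (map butlast a)"

lemma length_cyclic_content: "length (cyclic_content a) = (\<Sum>j<length a. length (a ! j) - 1)"
  by (simp add: cyclic_content_def length_concat sum_list_sum_nth atLeast0LessThan o_def)

lemma count_cyclic_content:
  "count_list (cyclic_content a) v = (\<Sum>j<length a. count_list (butlast (a ! j)) v)"
  by (simp add: cyclic_content_def count_list_concat sum_list_sum_nth atLeast0LessThan)

lemma sentence_edge_count_single:
  assumes "i < length a" "\<forall>k<length a. k \<noteq> i \<longrightarrow> word_edge_count (a ! k) e = 0"
  shows "sentence_edge_count a e = word_edge_count (a ! i) e"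
  unfolding sentence_edge_count_def using assms
  by (subst sum.remove[of _ i]) (auto intro!: sum.neutral)

subsection \<open>Cutting a spike\<close>

definition spike_at :: "sentence \<Rightarrow> nat \<Rightarrow> word \<Rightarrow> nat \<Rightarrow> nat \<Rightarrow> word \<Rightarrow> bool" where
  "spike_at a i p u v q \<longleftrightarrow>
     i < length a \<and> a ! i = p @ [u, v, u] @ q \<and> v \<noteq> u \<and> v \<notin> set p \<and> v \<notin> set q \<and>
     (\<forall>j<length a. j \<noteq> i \<longrightarrow> v \<notin> set (a ! j))"

context
  fixes a :: sentence and i :: nat and p q :: word and u v :: nat
  assumes spike: "spike_at a i p u v q"
begin

private lemma spike_facts:
  "i < length a" "a ! i = p @ [u, v, u] @ q"
  "\<And>j. j < length a \<Longrightarrow> v \<notin> set (a[i := p @ u # q] ! j)"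
  using spike unfolding spike_at_def by (auto simp: nth_list_update)

lemma cut_spike_letters: "sentence_letters a = insert v (sentence_letters (a[i := p @ u # q]))"
  unfolding sentence_letters_nth UN_nth_list_update[OF spike_facts(1)] length_list_update
  using spike_facts(2) by auto

lemma cut_spike_wt: "wt a = Suc (wt (a[i := p @ u # q]))"
proof -
  have "v \<notin> sentence_letters (a[i := p @ u # q])"
    using spike_facts(3) by (auto simp: sentence_letters_nth)
  then show ?thesis
    unfolding wt_def cut_spike_letters by (simp add: sentence_letters_nth)
qed

lemma cut_spike_length: "length (cyclic_content a) = length (cyclic_content (a[i := p @ u # q])) + 2"
  using sum_nth_list_update[where f = "\<lambda>w. length w - 1" and xs = a and i = i and x = "p @ u # q"]
    spike_facts(1,2)
  by (simp add: length_cyclic_content)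

lemma cut_spike_edge_count:
  "sentence_edge_count a e = sentence_edge_count (a[i := p @ u # q]) e + (if e = {u, v} then 2 else 0)"
  using sum_nth_list_update[where f = "\<lambda>w. word_edge_count w e" and xs = a and i = i and x = "p @ u # q"]
    spike_facts(1,2) word_edge_count_cut[of p u v q e]
  by (simp add: sentence_edge_count_def)

lemma cut_spike_word_edges:
  assumes "j < length a"
  shows "word_edges (a[i := p @ u # q] ! j) \<subseteq> word_edges (a ! j)"
    and "word_edges (a ! j) \<subseteq> insert {u, v} (word_edges (a[i := p @ u # q] ! j))"
    and "{u, v} \<notin> word_edges (a[i := p @ u # q] ! j)"
proof -
  have "word_edges (a ! j) = insert {u, v} (word_edges (a[i := p @ u # q] ! j)) \<or>
        word_edges (a ! j) = word_edges (a[i := p @ u # q] ! j)"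
  proof (cases "j = i")
    case True
    then show ?thesis
      using spike_facts(1,2) word_edges_cut[of p u v q] by simp
  qed simp
  then show "word_edges (a[i := p @ u # q] ! j) \<subseteq> word_edges (a ! j)"
    and "word_edges (a ! j) \<subseteq> insert {u, v} (word_edges (a[i := p @ u # q] ! j))"
    by blast+
  show "{u, v} \<notin> word_edges (a[i := p @ u # q] ! j)"
    using spike_facts(3)[OF assms] word_edge_subset by blast
qed

lemma cut_spike_weak_CLT:
  assumes "weak_CLT_sentence a"
  shows "weak_CLT_sentence (a[i := p @ u # q])"
  unfolding weak_CLT_sentence_def
proof (intro conjI ballI allI impI)
  fix e assume "e \<in> sentence_edges (a[i := p @ u # q])"
  then obtain j where j: "j < length a" "e \<in> word_edges (a[i := p @ u # q] ! j)"
    by (auto simp: sentence_edges_nth)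
  then have "e \<in> sentence_edges a" "e \<noteq> {u, v}"
    using cut_spike_word_edges[OF j(1)] by (auto simp: sentence_edges_nth)
  then show "2 \<le> sentence_edge_count (a[i := p @ u # q]) e"
    using assms cut_spike_edge_count[of e] unfolding weak_CLT_sentence_def by auto
next
  fix k assume "k < length (a[i := p @ u # q])"
  then have k: "k < length a" by simp
  then obtain j e where j: "j < length a" "j \<noteq> k" "e \<in> word_edges (a ! k)" "e \<in> word_edges (a ! j)"
    using assms unfolding weak_CLT_sentence_def by blast
  (* The shared edge cannot be {u,v}: then v would lie in two different words. *)
  have "e \<noteq> {u, v}"
    using j k spike word_edge_subset[OF j(3)] word_edge_subset[OF j(4)]
    unfolding spike_at_def by blast
  then have "e \<in> word_edges (a[i := p @ u # q] ! k) \<inter> word_edges (a[i := p @ u # q] ! j)"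
    using cut_spike_word_edges(2)[OF k] cut_spike_word_edges(2)[OF j(1)] j(3,4) by blast
  then show "\<exists>j<length (a[i := p @ u # q]). j \<noteq> k \<and>
      word_edges (a[i := p @ u # q] ! k) \<inter> word_edges (a[i := p @ u # q] ! j) \<noteq> {}"
    using j(1,2) by auto
qed

lemma cut_spike_closed:
  assumes "\<forall>w\<in>set a. closed_word w \<and> hd w = r"
  shows "\<forall>w\<in>set (a[i := p @ u # q]). closed_word w \<and> hd w = r"
proof -
  have "closed_word (a ! i) \<and> hd (a ! i) = r"
    using assms spike_facts(1) by auto
  moreover have "hd (a ! i) = hd (p @ u # q) \<and> last (a ! i) = last (p @ u # q)"
    using spike_facts(2) by (cases p; cases q) auto
  ultimately have "closed_word (p @ u # q) \<and> hd (p @ u # q) = r"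
    by (simp add: closed_word_def)
  then show ?thesis
    using assms by (auto dest: set_update_subset_insert[THEN subsetD])
qed

end

text \<open>In a closed word the last letter repeats the first, so dropping it does not change
  the number of occurrences of any other letter.\<close>
lemma count_butlast_closed:
  assumes "closed_word w" "hd w = r" "v \<noteq> r"
  shows "count_list (butlast w) v = count_list w v"
proof -
  have "w = butlast w @ [r]"
    using assms(1,2) unfolding closed_word_def by (metis append_butlast_last_id)
  then show ?thesis
    using assms(3) by (metis add_0_right count_list.simps count_list_append)
qed

lemma split_single_interior:
  assumes "count_list w v = 1" "hd w \<noteq> v" "last w \<noteq> v"
  obtains p u u' q where "w = p @ [u, v, u'] @ q" "v \<notin> set p" "v \<notin> set q" "v \<noteq> u" "v \<noteq> u'"
proof -
  obtain pre rest where w: "w = pre @ v # rest" "v \<notin> set pre" "v \<notin> set rest"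
    using count_list_Suc_split_first[of w v 0] assms(1) by (auto simp: count_list_0_iff)
  obtain p u where "pre = p @ [u]"
    using w(1) assms(2) by (cases pre rule: rev_cases) auto
  moreover obtain u' q where "rest = u' # q"
    using w(1) assms(3) by (cases rest) auto
  ultimately show ?thesis
    using that w by auto
qed

text \<open>Otherwise it is passed through as u v u' with u \<noteq> u', and the edge {u,v} occurs once.\<close>
lemma single_occurrence_is_spike:
  assumes words: "\<forall>w\<in>set a. closed_word w \<and> hd w = r"
    and S1: "\<forall>e\<in>sentence_edges a. 2 \<le> sentence_edge_count a e"
    and "v \<noteq> r" and once: "count_list (cyclic_content a) v = 1"
  obtains i p u q where "spike_at a i p u v q"
proof -
  have count_word: "count_list (butlast (a ! k)) v = count_list (a ! k) v" if "k < length a" for k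
    using count_butlast_closed words \<open>v \<noteq> r\<close> that by auto
  obtain i where i: "i < length a" "count_list (a ! i) v = 1"
    and others: "\<forall>k<length a. k \<noteq> i \<longrightarrow> v \<notin> set (a ! k)"
    using once unfolding count_cyclic_content sum_eq_1_iff[OF finite_lessThan]
    by (auto simp: count_word count_list_0_iff)
  have "closed_word (a ! i) \<and> hd (a ! i) = r"
    using words i(1) by simp
  then have ends: "hd (a ! i) = r" "last (a ! i) = r"
    unfolding closed_word_def by auto
  obtain p u u' q where ai: "a ! i = p @ [u, v, u'] @ q" "v \<notin> set p" "v \<notin> set q" "v \<noteq> u" "v \<noteq> u'"
    using split_single_interior[OF i(2)] ends \<open>v \<noteq> r\<close> by metis
  have "u = u'"
  proof (rule ccontr)
    assume "u \<noteq> u'"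
    then have "word_edge_count (a ! i) {u, v} = 1"
      using word_edge_count_passage ai by simp
    moreover have "\<forall>k<length a. k \<noteq> i \<longrightarrow> word_edge_count (a ! k) {u, v} = 0"
      using others word_edge_count_absent by blast
    ultimately have "sentence_edge_count a {u, v} = 1"
      using sentence_edge_count_single[OF i(1)] by simp
    moreover have "{u, v} \<in> sentence_edges a"
      using i(1) edge_if_count_pos[of "a ! i" "{u, v}"] \<open>word_edge_count (a ! i) {u, v} = 1\<close>
      by (auto simp: sentence_edges_nth)
    ultimately show False
      using S1 by fastforce
  qed
  then show ?thesis
    using that i(1) ai others unfolding spike_at_def by blast
qed

text \<open>Without spikes, counting the letters of the cyclic content gives the bound: the first
  letter r occurs in every word, every other letter at least twice.\<close>
lemma bound_without_spikes:
  assumes words: "\<forall>w\<in>set a. closed_word w \<and> hd w = r"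
    and clt: "weak_CLT_sentence a" and "a \<noteq> []"
    and no_spike: "\<And>i p u v q. \<not> spike_at a i p u v q"
  shows "2 * wt a + length a \<le> 2 + length (cyclic_content a)"
proof -
  define L where "L = sentence_letters a"
  define C where "C = cyclic_content a"
  have S1: "\<forall>e\<in>sentence_edges a. 2 \<le> sentence_edge_count a e"
    using clt unfolding weak_CLT_sentence_def by blast
  have long: "2 \<le> length (a ! j)" if "j < length a" for j
    using clt that length_ge_2_if_edge unfolding weak_CLT_sentence_def by blast
  have word_j: "closed_word (a ! j) \<and> hd (a ! j) = r" if "j < length a" for j
    using words that by simp
  have finL: "finite L"
    by (simp add: L_def sentence_letters_nth)
  have "r \<in> L"
    using word_j[of 0] \<open>a \<noteq> []\<close> unfolding L_def sentence_letters_nth closed_word_def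
    by (metis hd_in_set length_greater_0_conv lessThan_iff UN_iff)
  have CL: "set C \<subseteq> L"
    by (auto simp: C_def L_def cyclic_content_def sentence_letters_def dest: in_set_butlastD)
  have count_r: "length a \<le> count_list C r"
  proof -
    have "1 \<le> count_list (butlast (a ! j)) r" if "j < length a" for j
    proof -
      have "r \<in> set (butlast (a ! j))"
        using long[OF that] word_j[OF that] by (cases "a ! j") auto
      then show ?thesis
        by (metis count_list_0_iff less_one not_less)
    qed
    then have "(\<Sum>j<length a. 1) \<le> (\<Sum>j<length a. count_list (butlast (a ! j)) r)"
      by (intro sum_mono) auto
    then show ?thesis
      by (simp add: C_def count_cyclic_content)
  qed
  have count_other: "2 \<le> count_list C v" if "v \<in> L" "v \<noteq> r" for v
  proof -
    obtain j where j: "j < length a" "v \<in> set (a ! j)"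
      using \<open>v \<in> L\<close> by (auto simp: L_def sentence_letters_nth)
    have "count_list (butlast (a ! j)) v = count_list (a ! j) v"
      using count_butlast_closed word_j[OF j(1)] \<open>v \<noteq> r\<close> by blast
    then have "0 < count_list (butlast (a ! j)) v"
      using j(2) by (metis count_list_0_iff gr0I)
    also have "\<dots> \<le> count_list C v"
      unfolding C_def count_cyclic_content using j(1) by (intro member_le_sum) auto
    finally have "0 < count_list C v" .
    moreover have "count_list C v \<noteq> 1"
      using single_occurrence_is_spike[OF words S1 \<open>v \<noteq> r\<close>] no_spike unfolding C_def by metis
    ultimately show ?thesis by linarith
  qed
  have "length a + 2 * (card L - 1) = (\<Sum>v\<in>L. if v = r then length a else 2)"
    using finL \<open>r \<in> L\<close> by (simp add: sum.remove[of L r] sum.If_cases Diff_eq[symmetric])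
  also have "\<dots> \<le> (\<Sum>v\<in>L. count_list C v)"
    using count_r count_other by (intro sum_mono) auto
  also have "\<dots> = length C"
    using sum_count_set[OF CL finL] .
  finally show ?thesis
    using finL \<open>r \<in> L\<close> card_gt_0_iff[of L] unfolding wt_def L_def C_def by linarith
qed

lemma weak_CLT_letter_bound:
  assumes "\<forall>w\<in>set a. closed_word w \<and> hd w = r" and "weak_CLT_sentence a"
  shows "2 * wt a + length a \<le> 2 + length (cyclic_content a)"
  using assms
proof (induction "length (cyclic_content a)" arbitrary: a rule: less_induct)
  case less
  show ?case
  proof (cases "\<exists>i p u v q. spike_at a i p u v q")
    case True
    then obtain i p u v q where spike: "spike_at a i p u v q" by blast
    have shorter: "length (cyclic_content (a[i := p @ u # q])) < length (cyclic_content a)"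
      using cut_spike_length[OF spike] by simp
    have "2 * wt (a[i := p @ u # q]) + length (a[i := p @ u # q])
          \<le> 2 + length (cyclic_content (a[i := p @ u # q]))"
      using less.hyps[OF shorter] cut_spike_closed[OF spike less.prems(1)]
        cut_spike_weak_CLT[OF spike less.prems(2)] by blast
    then show ?thesis
      using cut_spike_wt[OF spike] cut_spike_length[OF spike] by simp
  next
    case False
    then show ?thesis
      using less.prems bound_without_spikes[of a r]
      by (cases "a = []") (auto simp: wt_def sentence_letters_def cyclic_content_def)
  qed
qed

theorem mainTheorem4:
  fixes a :: sentence
  assumes "\<forall>w\<in>set a. is_word w"
    and "weak_CLT_sentence a"
    and "\<forall>w\<in>set a. closed_word w \<and> hd w = 1"
  shows "real (wt a) \<le> 1 + (\<Sum>i<length a. (real (length (a ! i)) - 2) / 2)"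
proof -
  have "2 * wt a + length a \<le> 2 + (\<Sum>j<length a. length (a ! j) - 1)"
    using weak_CLT_letter_bound[OF assms(3,2)] by (simp add: length_cyclic_content)
  then have "real (2 * wt a + length a) \<le> real (2 + (\<Sum>j<length a. length (a ! j) - 1))"
    by (simp only: of_nat_le_iff)
  then have bound: "2 * real (wt a) + real (length a) \<le> 2 + (\<Sum>j<length a. real (length (a ! j) - 1))"
    by simp
  have "real (length (a ! j) - 1) = real (length (a ! j)) - 1" if "j < length a" for j
    using assms(3) that by (simp add: closed_word_def of_nat_diff Suc_le_eq)
  then have "(\<Sum>j<length a. real (length (a ! j) - 1)) = (\<Sum>j<length a. (real (length (a ! j)) - 2)) + real (length a)"
    by (simp add: sum_subtractf)
  then show ?thesis
    using bound by (simp add: sum_divide_distrib[symmetric])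
qed

end
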